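(* If $\theta_0,\theta_1\in V_\Lambda\setminus\mathcal W(\mathcal G)$ lie in the same path component of $V_\Lambda\setminus\mathcal W(\mathcal G)$, then $\mathcal P(\theta_0)=\mathcal P(\theta_1)$.
   Context: Let $\Lambda$ be a finite dimensional algebra over a field with $n$ isoclasses of simple modules, and $\mathrm{mod}\text-\Lambda$ the category of finitely generated right $\Lambda$-modules. Fix a torsion class $\mathcal G\subseteq\mathrm{mod}\text-\Lambda$ (closed under isomorphisms, extensions and quotients). For $B\in\mathcal G$, a subobject of $B$ is a submodule in $\mathcal G$; a subobject $A\subseteq B$ is strict if $A\cap B'\in\mathcal G$ for every subobject $B'$ of $B$; a strict quotient of $B$ is $B/A$ with $A$ a strict subobject. Let $V_\Lambda=\mathrm{Hom}_{\mathbb Z}(K_0\Lambda,\mathbb R)\cong\mathbb R^n$ (with its Euclidean topology); $\theta(M)$ denotes $\theta$ applied to the dimension vector of $M$. For $M\in\mathcal G$, the pseudo-wall $D_{\mathcal G}(M)$ is the set of $\theta\in V_\Lambda$ with $\theta(M)=0$ and $\theta(M')\le0$ for every strict subobject $M'$ of $M$. $\mathcal W(\theta)$ is the class of $X\in\mathcal G$ with $\theta\in D_{\mathcal G}(X)$, and $\mathcal W(\mathcal G)$ is the set of $\theta$ with $\mathcal W(\theta)\ne\{0\}$, equivalently the union of the $D_{\mathcal G}(M)$ over nonzero $M\in\mathcal G$. $\mathcal P(\theta)$ is the class consisting of $0$ and all nonzero $M\in\mathcal G$ such that $\theta(M'')>0$ for every nonzero strict quotient $M''$ of $M$ (including $M''=M$).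 *)

theory Defs
  imports "HOL-Analysis.Analysis"
begin

(* Ambient k-vector space used as universe for carriers of modules:
   functions nat => 'k with pointwise operations.  Every finite-dimensional
   k-vector space is isomorphic to a subspace of it. *)
definition vzero :: "nat \<Rightarrow> 'k::field" where "vzero = (\<lambda>i. 0)"
definition vadd :: "(nat \<Rightarrow> 'k::field) \<Rightarrow> (nat \<Rightarrow> 'k) \<Rightarrow> (nat \<Rightarrow> 'k)"
  where "vadd v w = (\<lambda>i. v i + w i)"
definition vsc :: "'k::field \<Rightarrow> (nat \<Rightarrow> 'k) \<Rightarrow> (nat \<Rightarrow> 'k)"
  where "vsc c v = (\<lambda>i. c * v i)"

definition vsubspace :: "(nat \<Rightarrow> 'k::field) set \<Rightarrow> bool" where
  "vsubspace V \<longleftrightarrow> vzero \<in> V \<and> (\<forall>v\<in>V. \<forall>w\<in>V. vadd v w \<in> V) \<and> (\<forall>c. \<forall>v\<in>V. vsc c v \<in> V)"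

definition vfin_dim :: "(nat \<Rightarrow> 'k::field) set \<Rightarrow> bool" where
  "vfin_dim V \<longleftrightarrow> (\<exists>B. finite B \<and> B \<subseteq> V \<and>
      (\<forall>v\<in>V. \<exists>c. v = (\<lambda>i. \<Sum>b\<in>B. c b * b i)))"

(* Lambda: a finite dimensional algebra over the field 'k, given as a ring 'a
   with a k-scalar multiplication sc *)
definition fd_algebra :: "('k::field \<Rightarrow> 'a::ring_1 \<Rightarrow> 'a) \<Rightarrow> bool" where
  "fd_algebra sc \<longleftrightarrow> vector_space sc \<and>
     (\<forall>c x y. sc c (x * y) = sc c x * y \<and> sc c (x * y) = x * sc c y) \<and>
     (\<exists>B. finite B \<and> module.span sc B = UNIV)"

(* a (right) Lambda-module: carrier subspace V and right action act v a = v.a *)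
type_synonym ('k, 'a) rmod = "(nat \<Rightarrow> 'k) set \<times> ((nat \<Rightarrow> 'k) \<Rightarrow> 'a \<Rightarrow> (nat \<Rightarrow> 'k))"

definition is_module :: "('k::field \<Rightarrow> 'a::ring_1 \<Rightarrow> 'a) \<Rightarrow> ('k, 'a) rmod \<Rightarrow> bool" where
  "is_module sc M \<longleftrightarrow> (case M of (V, act) \<Rightarrow>
     vsubspace V \<and> vfin_dim V \<and>
     (\<forall>v\<in>V. \<forall>a. act v a \<in> V) \<and>
     (\<forall>v\<in>V. act v 1 = v) \<and>
     (\<forall>v\<in>V. \<forall>a b. act v (a * b) = act (act v a) b) \<and>
     (\<forall>v\<in>V. \<forall>w\<in>V. \<forall>a. act (vadd v w) a = vadd (act v a) (act w a)) \<and>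
     (\<forall>v\<in>V. \<forall>a b. act v (a + b) = vadd (act v a) (act v b)) \<and>
     (\<forall>v\<in>V. \<forall>c a. act (vsc c v) a = vsc c (act v a) \<and> act v (sc c a) = vsc c (act v a)))"

definition is_zero_module :: "('k::field, 'a) rmod \<Rightarrow> bool" where
  "is_zero_module M \<longleftrightarrow> fst M = {vzero}"

(* W is (the carrier of) a submodule of M; the submodule itself is (W, snd M) *)
definition is_submod :: "('k::field \<Rightarrow> 'a::ring_1 \<Rightarrow> 'a) \<Rightarrow> ('k, 'a) rmod \<Rightarrow> (nat \<Rightarrow> 'k) set \<Rightarrow> bool" where
  "is_submod sc M W \<longleftrightarrow> is_module sc M \<and> W \<subseteq> fst M \<and> is_module sc (W, snd M)"

definition is_hom :: "('k::field \<Rightarrow> 'a::ring_1 \<Rightarrow> 'a) \<Rightarrow> ('k, 'a) rmod \<Rightarrow> ('k, 'a) rmod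
    \<Rightarrow> ((nat \<Rightarrow> 'k) \<Rightarrow> (nat \<Rightarrow> 'k)) \<Rightarrow> bool" where
  "is_hom sc M N g \<longleftrightarrow> is_module sc M \<and> is_module sc N \<and>
     (\<forall>v\<in>fst M. g v \<in> fst N) \<and>
     (\<forall>v\<in>fst M. \<forall>w\<in>fst M. g (vadd v w) = vadd (g v) (g w)) \<and>
     (\<forall>c. \<forall>v\<in>fst M. g (vsc c v) = vsc c (g v)) \<and>
     (\<forall>a. \<forall>v\<in>fst M. g (snd M v a) = snd N (g v) a)"

(* N is a quotient of M by the submodule A, via the surjection g with kernel A,
   i.e. 0 -> A -> M -> N -> 0 is a short exact sequence *)
definition is_quot :: "('k::field \<Rightarrow> 'a::ring_1 \<Rightarrow> 'a) \<Rightarrow> ('k, 'a) rmod \<Rightarrow> (nat \<Rightarrow> 'k) set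
    \<Rightarrow> ('k, 'a) rmod \<Rightarrow> ((nat \<Rightarrow> 'k) \<Rightarrow> (nat \<Rightarrow> 'k)) \<Rightarrow> bool" where
  "is_quot sc M A N g \<longleftrightarrow> is_submod sc M A \<and> is_hom sc M N g \<and>
     g ` fst M = fst N \<and> {v \<in> fst M. g v = vzero} = A"

definition torsion_class :: "('k::field \<Rightarrow> 'a::ring_1 \<Rightarrow> 'a) \<Rightarrow> ('k, 'a) rmod set \<Rightarrow> bool" where
  "torsion_class sc G \<longleftrightarrow> (\<forall>M\<in>G. is_module sc M) \<and>
     (\<forall>M N g. M \<in> G \<and> is_hom sc M N g \<and> g ` fst M = fst N \<longrightarrow> N \<in> G) \<and>
     (\<forall>M A N g. is_quot sc M A N g \<and> (A, snd M) \<in> G \<and> N \<in> G \<longrightarrow> M \<in> G)"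

definition subobj :: "('k::field \<Rightarrow> 'a::ring_1 \<Rightarrow> 'a) \<Rightarrow> ('k, 'a) rmod set \<Rightarrow> ('k, 'a) rmod
    \<Rightarrow> (nat \<Rightarrow> 'k) set \<Rightarrow> bool" where
  "subobj sc G B A \<longleftrightarrow> is_submod sc B A \<and> (A, snd B) \<in> G"

definition strict_subobj :: "('k::field \<Rightarrow> 'a::ring_1 \<Rightarrow> 'a) \<Rightarrow> ('k, 'a) rmod set \<Rightarrow> ('k, 'a) rmod
    \<Rightarrow> (nat \<Rightarrow> 'k) set \<Rightarrow> bool" where
  "strict_subobj sc G B A \<longleftrightarrow> subobj sc G B A \<and>
     (\<forall>B'. subobj sc G B B' \<longrightarrow> (A \<inter> B', snd B) \<in> G)"

(* V_Lambda = Hom(K_0 Lambda, R): real-valued functions on modules that are additive on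
   short exact sequences (hence isomorphism invariant); normalised to 0 off modules *)
definition VLam :: "('k::field \<Rightarrow> 'a::ring_1 \<Rightarrow> 'a) \<Rightarrow> (('k, 'a) rmod \<Rightarrow> real) set" where
  "VLam sc = {\<theta>. (\<forall>M. \<not> is_module sc M \<longrightarrow> \<theta> M = 0) \<and>
     (\<forall>M A N g. is_quot sc M A N g \<longrightarrow> \<theta> M = \<theta> (A, snd M) + \<theta> N)}"

definition Dwall :: "('k::field \<Rightarrow> 'a::ring_1 \<Rightarrow> 'a) \<Rightarrow> ('k, 'a) rmod set \<Rightarrow> ('k, 'a) rmod
    \<Rightarrow> (('k, 'a) rmod \<Rightarrow> real) set" where
  "Dwall sc G M = {\<theta> \<in> VLam sc. \<theta> M = 0 \<and>
     (\<forall>A. strict_subobj sc G M A \<longrightarrow> \<theta> (A, snd M) \<le> 0)}"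

definition Wall :: "('k::field \<Rightarrow> 'a::ring_1 \<Rightarrow> 'a) \<Rightarrow> ('k, 'a) rmod set
    \<Rightarrow> (('k, 'a) rmod \<Rightarrow> real) set" where
  "Wall sc G = (\<Union>M\<in>{M \<in> G. \<not> is_zero_module M}. Dwall sc G M)"

definition Pcls :: "('k::field \<Rightarrow> 'a::ring_1 \<Rightarrow> 'a) \<Rightarrow> ('k, 'a) rmod set
    \<Rightarrow> (('k, 'a) rmod \<Rightarrow> real) \<Rightarrow> ('k, 'a) rmod set" where
  "Pcls sc G \<theta> = {M. is_module sc M \<and> (is_zero_module M \<or>
     (M \<in> G \<and> (\<forall>A N g. strict_subobj sc G M A \<and> is_quot sc M A N g \<and> \<not> is_zero_module N
          \<longrightarrow> \<theta> N > 0)))}"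

(* theta0, theta1 lie in the same path component of V_Lambda - W(G).  The (Euclidean)
   topology of V_Lambda is the one making every evaluation theta |-> theta(M) continuous. *)
definition same_path_comp :: "('k::field \<Rightarrow> 'a::ring_1 \<Rightarrow> 'a) \<Rightarrow> ('k, 'a) rmod set
    \<Rightarrow> (('k, 'a) rmod \<Rightarrow> real) \<Rightarrow> (('k, 'a) rmod \<Rightarrow> real) \<Rightarrow> bool" where
  "same_path_comp sc G \<theta>0 \<theta>1 \<longleftrightarrow> (\<exists>\<gamma> :: real \<Rightarrow> ('k, 'a) rmod \<Rightarrow> real.
     \<gamma> 0 = \<theta>0 \<and> \<gamma> 1 = \<theta>1 \<and>
     (\<forall>t\<in>{0..1}. \<gamma> t \<in> VLam sc - Wall sc G) \<and>
     (\<forall>M. continuous_on {0..1} (\<lambda>t. \<gamma> t M)))"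

end

theory Submission
  imports Defs "HOL-Library.Function_Algebras"
begin

(* Fix a nonzero M in G and a path \<gamma> from \<theta>0 to \<theta>1 avoiding W(G). For \<theta> in VLam,
   M \<in> P(\<theta>) says \<theta>(A) < \<theta>(M) for every proper strict subobject A of M.
   Although M may have infinitely many submodules, the functionals \<theta> \<mapsto> \<theta>(A) on VLam,
   for A a submodule of M, form a finite set: for a maximal submodule M' of M, either
   A \<subseteq> M' or A + M' = M and \<theta>(A) = \<theta>(A \<inter> M') + \<theta>(M) - \<theta>(M'), so induction on the
   dimension applies. Hence, if M \<in> P(\<theta>0) but M \<notin> P(\<theta>1), the intermediate value
   theorem for the minimum of the finitely many continuous functions
   t \<mapsto> \<gamma> t M - \<gamma> t A yields an s with \<gamma> s A \<le> \<gamma> s M for all proper strict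
   subobjects A, with equality for some A0. Strict subobjects of M/A0 pull back to
   strict subobjects of M containing A0, so \<gamma> s lies on the pseudo-wall of M/A0,
   contradicting \<gamma> s \<notin> W(G). Reversing the path gives the other inclusion. *)

section \<open>Finite-dimensional subspaces of the ambient space\<close>

lemma vzero_eq [simp]: "vzero = (0 :: nat \<Rightarrow> 'k::field)"
  by (simp add: vzero_def fun_eq_iff)

lemma vadd_eq [simp]: "vadd v w = v + (w :: nat \<Rightarrow> 'k::field)"
  by (simp add: vadd_def plus_fun_def)

interpretation VS: vector_space "vsc :: 'k::field \<Rightarrow> (nat \<Rightarrow> 'k) \<Rightarrow> (nat \<Rightarrow> 'k)"
  by unfold_locales (simp_all add: vsc_def fun_eq_iff algebra_simps)

interpretation VS2: vector_space_pair
  "vsc :: 'k::field \<Rightarrow> (nat \<Rightarrow> 'k) \<Rightarrow> (nat \<Rightarrow> 'k)" "vsc :: 'k::field \<Rightarrow> (nat \<Rightarrow> 'k) \<Rightarrow> (nat \<Rightarrow> 'k)"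
  by unfold_locales

lemma vsubspace_iff: "vsubspace V \<longleftrightarrow> VS.subspace (V :: (nat \<Rightarrow> 'k::field) set)"
  by (simp add: vsubspace_def VS.subspace_def)

lemma VS_span_finite_pointwise:
  fixes B :: "(nat \<Rightarrow> 'k::field) set"
  assumes "finite B"
  shows "VS.span B = {v. \<exists>c. v = (\<lambda>i. \<Sum>b\<in>B. c b * b i)}"
proof -
  have "(\<Sum>b\<in>B. vsc (c b) b) = (\<lambda>i. \<Sum>b\<in>B. c b * b i)" for c :: "(nat \<Rightarrow> 'k) \<Rightarrow> 'k"
    by (induction B rule: infinite_finite_induct) (auto simp: vsc_def fun_eq_iff)
  then show ?thesis
    using assms by (auto simp: VS.span_finite)
qed

lemma vfin_dim_iff:
  "vfin_dim V \<longleftrightarrow> (\<exists>B. finite B \<and> B \<subseteq> V \<and> V \<subseteq> VS.span (B :: (nat \<Rightarrow> 'k::field) set))"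
  unfolding vfin_dim_def by (rule ex_cong1) (auto simp: VS_span_finite_pointwise)

lemma vfin_dim_independent_finite:
  assumes "vfin_dim V" "VS.independent B" "B \<subseteq> (V :: (nat \<Rightarrow> 'k::field) set)"
  shows "finite B"
proof -
  obtain T where "finite T" "V \<subseteq> VS.span T"
    using assms(1) vfin_dim_iff by blast
  then show ?thesis
    using VS.independent_span_bound assms(2,3) by blast
qed

lemma vfin_dim_subset:
  assumes "vfin_dim V" "W \<subseteq> (V :: (nat \<Rightarrow> 'k::field) set)"
  shows "vfin_dim W"
proof -
  obtain B where "B \<subseteq> W" "VS.independent B" "W \<subseteq> VS.span B"
    by (meson VS.basis_exists)
  moreover have "finite B"
    using vfin_dim_independent_finite assms calculation(1,2) by blast
  ultimately show ?thesis
    using vfin_dim_iff by blast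
qed

lemma VS_dim_psubset:
  assumes "vfin_dim V" "VS.subspace W" "W \<subset> (V :: (nat \<Rightarrow> 'k::field) set)"
  shows "VS.dim W < VS.dim V"
proof -
  obtain B where B: "B \<subseteq> W" "VS.independent B" "W \<subseteq> VS.span B" "card B = VS.dim W"
    by (meson VS.basis_exists)
  obtain C where C: "C \<subseteq> V" "VS.independent C" "V \<subseteq> VS.span C" "card C = VS.dim V"
    by (meson VS.basis_exists)
  have "finite B" "finite C"
    using vfin_dim_independent_finite assms B C by blast+
  obtain x where x: "x \<in> V" "x \<notin> W"
    using assms(3) by blast
  have "x \<notin> VS.span B"
    using VS.span_minimal[OF B(1) assms(2)] x(2) by blast
  then have "VS.independent (insert x B)" "x \<notin> B"
    using VS.independent_insertI B(2) VS.span_superset by blast+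
  moreover have "insert x B \<subseteq> VS.span C"
    using C(3) x(1) B(1) assms(3) by blast
  ultimately have "card B + 1 \<le> card C"
    using VS.independent_span_bound[OF \<open>finite C\<close>] \<open>finite B\<close> by fastforce
  then show ?thesis
    using B(4) C(4) by linarith
qed

lemma linear_projection_along_exists:
  assumes "VS.subspace (A :: (nat \<Rightarrow> 'k::field) set)"
  obtains p where "Vector_Spaces.linear vsc vsc p" "\<And>v. v - p v \<in> A" "\<And>v. v \<in> A \<Longrightarrow> p v = 0"
proof -
  obtain B where B: "B \<subseteq> A" "VS.independent B" "A \<subseteq> VS.span B"
    by (meson VS.basis_exists)
  define q where "q = VS2.construct B id"
  have lin: "Vector_Spaces.linear vsc vsc q"
    unfolding q_def using VS2.linear_construct[OF B(2)] .
  have "q v \<in> A" for v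
    using VS2.construct_in_span[OF B(2), of id v] VS.span_minimal[OF B(1) assms]
    unfolding q_def by auto
  moreover have "q v = v" if "v \<in> A" for v
    using VS2.linear_eq_on[OF lin VS.linear_id] that B(3) VS2.construct_basis[OF B(2)]
    unfolding q_def by auto
  moreover have "Vector_Spaces.linear vsc vsc (\<lambda>v. v - q v)"
    using VS2.linear_compose_sub[OF VS.linear_id lin] by (simp add: id_def)
  ultimately show ?thesis
    using that[of "\<lambda>v. v - q v"] by simp
qed

section \<open>Modules, submodules and quotients\<close>

lemma is_module_iff: "is_module sc (V, act) \<longleftrightarrow>
     VS.subspace V \<and> vfin_dim V \<and>
     (\<forall>v\<in>V. \<forall>a. act v a \<in> V) \<and>
     (\<forall>v\<in>V. act v 1 = v) \<and>
     (\<forall>v\<in>V. \<forall>a b. act v (a * b) = act (act v a) b) \<and>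
     (\<forall>v\<in>V. \<forall>w\<in>V. \<forall>a. act (v + w) a = act v a + act w a) \<and>
     (\<forall>v\<in>V. \<forall>a b. act v (a + b) = act v a + act v b) \<and>
     (\<forall>v\<in>V. \<forall>c a. act (vsc c v) a = vsc c (act v a) \<and> act v (sc c a) = vsc c (act v a))"
  by (simp add: is_module_def vsubspace_iff)

lemma
  assumes "is_module sc M"
  shows module_subspace: "VS.subspace (fst M)"
    and module_vfin_dim: "vfin_dim (fst M)"
    and module_act_closed: "v \<in> fst M \<Longrightarrow> snd M v a \<in> fst M"
    and module_act_add: "v \<in> fst M \<Longrightarrow> w \<in> fst M \<Longrightarrow> snd M (v + w) a = snd M v a + snd M w a"
  using assms by (cases M; simp add: is_module_iff)+

lemma module_act_zero:
  assumes "is_module sc M"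
  shows "snd M 0 a = 0"
proof -
  have "0 \<in> fst M"
    using VS.subspace_0[OF module_subspace[OF assms]] .
  then have "snd M (0 + 0) a = snd M 0 a + snd M 0 a"
    using module_act_add[OF assms] by blast
  then show ?thesis
    by simp
qed

lemma submodD:
  assumes "is_submod sc M W"
  shows "is_module sc M" "is_module sc (W, snd M)" "W \<subseteq> fst M" "VS.subspace W"
    and "v \<in> W \<Longrightarrow> snd M v a \<in> W"
  using assms by (simp_all add: is_submod_def is_module_iff)

lemma submodI:
  assumes "is_module sc M" "W \<subseteq> fst M" "VS.subspace W" "\<And>v a. v \<in> W \<Longrightarrow> snd M v a \<in> W"
  shows "is_submod sc M W"
proof -
  have "vfin_dim W"
    using vfin_dim_subset module_vfin_dim[OF assms(1)] assms(2) by blast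
  then show ?thesis
    using assms by (cases M) (simp add: is_submod_def is_module_iff subset_iff)
qed

lemma submod_zero: "is_module sc M \<Longrightarrow> is_submod sc M {0}"
  by (rule submodI) (auto simp: module_act_zero VS.subspace_0 module_subspace)

lemma submod_Int:
  assumes "is_submod sc M A" "is_submod sc M B"
  shows "is_submod sc M (A \<inter> B)"
  using submodD[OF assms(1)] submodD[OF assms(2)] by (intro submodI) (auto intro: VS.subspace_inter)

lemma submod_submod:
  "is_submod sc M A \<Longrightarrow> is_submod sc M B \<Longrightarrow> A \<subseteq> B \<Longrightarrow> is_submod sc (B, snd M) A"
  by (simp add: is_submod_def)

lemma submod_sum:
  assumes A: "is_submod sc M A" and B: "is_submod sc M B"
  shows "is_submod sc M {x + y | x y. x \<in> A \<and> y \<in> B}"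
proof (rule submodI)
  show "is_module sc M"
    using submodD(1)[OF A] .
  show "{x + y |x y. x \<in> A \<and> y \<in> B} \<subseteq> fst M"
    using submodD(3)[OF A] submodD(3)[OF B] VS.subspace_add[OF module_subspace[OF \<open>is_module sc M\<close>]]
    by blast
  show "VS.subspace {x + y |x y. x \<in> A \<and> y \<in> B}"
    using VS.subspace_sums[OF submodD(4)[OF A] submodD(4)[OF B]] .
  fix v a
  assume "v \<in> {x + y |x y. x \<in> A \<and> y \<in> B}"
  then obtain x y where "v = x + y" "x \<in> A" "y \<in> B"
    by blast
  moreover have "snd M (x + y) a = snd M x a + snd M y a"
    using module_act_add[OF submodD(1)[OF A]] submodD(3)[OF A] submodD(3)[OF B] calculation(2,3)
    by blast
  ultimately show "snd M v a \<in> {x + y |x y. x \<in> A \<and> y \<in> B}"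
    using submodD(5)[OF A] submodD(5)[OF B] by blast
qed

lemma homD:
  assumes "is_hom sc M N g"
  shows "is_module sc M" "is_module sc N" "v \<in> fst M \<Longrightarrow> g v \<in> fst N"
    and "v \<in> fst M \<Longrightarrow> w \<in> fst M \<Longrightarrow> g (v + w) = g v + g w"
    and "v \<in> fst M \<Longrightarrow> g (vsc c v) = vsc c (g v)"
    and "v \<in> fst M \<Longrightarrow> g (snd M v a) = snd N (g v) a"
  using assms unfolding is_hom_def by simp_all

lemma hom_zero:
  assumes "is_hom sc M N g"
  shows "g 0 = 0"
proof -
  have "0 \<in> fst M"
    using VS.subspace_0[OF module_subspace[OF homD(1)[OF assms]]] .
  then have "g (0 + 0) = g 0 + g 0"
    using homD(4)[OF assms] by blast
  then show ?thesis
    by simp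
qed

lemma hom_restrict:
  assumes g: "is_hom sc M N g" and B: "is_submod sc M B" and C: "is_submod sc N C"
    and "g ` B \<subseteq> C"
  shows "is_hom sc (B, snd M) (C, snd N) g"
proof -
  have BM: "v \<in> B \<Longrightarrow> v \<in> fst M" for v
    using submodD(3)[OF B] by blast
  show ?thesis
    unfolding is_hom_def fst_conv snd_conv
  proof (intro conjI ballI allI)
    show "is_module sc (B, snd M)" "is_module sc (C, snd N)"
      using submodD(2)[OF B] submodD(2)[OF C] .
    fix v assume v: "v \<in> B"
    show "g v \<in> C"
      using v \<open>g ` B \<subseteq> C\<close> by blast
    show "g (vsc c v) = vsc c (g v)" for c
      using homD(5)[OF g BM[OF v]] .
    show "g (snd M v a) = snd N (g v) a" for a
      using homD(6)[OF g BM[OF v]] .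
    show "g (vadd v w) = vadd (g v) (g w)" if "w \<in> B" for w
      using homD(4)[OF g BM[OF v] BM[OF that]] by simp
  qed
qed

lemma submod_image:
  assumes g: "is_hom sc M N g" and B: "is_submod sc M B"
  shows "is_submod sc N (g ` B)"
proof (rule submodI)
  have BM: "\<And>v. v \<in> B \<Longrightarrow> v \<in> fst M"
    using submodD(3)[OF B] by blast
  note sB = submodD(4)[OF B]
  show "is_module sc N"
    using homD(2)[OF g] .
  show "g ` B \<subseteq> fst N"
    using homD(3)[OF g] BM by blast
  show "VS.subspace (g ` B)"
    unfolding VS.subspace_def
  proof (intro conjI ballI allI)
    show "0 \<in> g ` B"
      using hom_zero[OF g] VS.subspace_0[OF sB] by (metis image_eqI)
  next
    fix x y assume "x \<in> g ` B" "y \<in> g ` B"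
    then obtain v w where "v \<in> B" "w \<in> B" "x = g v" "y = g w"
      by blast
    then show "x + y \<in> g ` B"
      using homD(4)[OF g, of v w] BM[of v] BM[of w] VS.subspace_add[OF sB] by (metis image_eqI)
  next
    fix c x assume "x \<in> g ` B"
    then obtain v where "v \<in> B" "x = g v"
      by blast
    then show "vsc c x \<in> g ` B"
      using homD(5)[OF g, of v c] BM[of v] VS.subspace_scale[OF sB] by (metis image_eqI)
  qed
  fix x a assume "x \<in> g ` B"
  then obtain v where "v \<in> B" "x = g v"
    by blast
  then show "snd N x a \<in> g ` B"
    using homD(6)[OF g, of v a] BM[of v] submodD(5)[OF B] by (metis image_eqI)
qed

lemma submod_vimage:
  assumes g: "is_hom sc M N g" and C: "is_submod sc N C"
  shows "is_submod sc M {v \<in> fst M. g v \<in> C}"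
proof (rule submodI)
  have mM: "is_module sc M"
    using homD(1)[OF g] .
  note sM = module_subspace[OF mM] and sC = submodD(4)[OF C]
  show "is_module sc M" "{v \<in> fst M. g v \<in> C} \<subseteq> fst M"
    using mM by auto
  show "VS.subspace {v \<in> fst M. g v \<in> C}"
    unfolding VS.subspace_def
  proof (intro conjI ballI allI)
    show "0 \<in> {v \<in> fst M. g v \<in> C}"
      using VS.subspace_0[OF sM] VS.subspace_0[OF sC] hom_zero[OF g] by simp
    show "x + y \<in> {v \<in> fst M. g v \<in> C}" if "x \<in> {v \<in> fst M. g v \<in> C}" "y \<in> {v \<in> fst M. g v \<in> C}" for x y
      using that VS.subspace_add[OF sM] VS.subspace_add[OF sC] homD(4)[OF g] by simp
    show "vsc c x \<in> {v \<in> fst M. g v \<in> C}" if "x \<in> {v \<in> fst M. g v \<in> C}" for c x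
      using that VS.subspace_scale[OF sM] VS.subspace_scale[OF sC] homD(5)[OF g] by simp
  qed
  show "snd M v a \<in> {v \<in> fst M. g v \<in> C}" if "v \<in> {v \<in> fst M. g v \<in> C}" for v a
    using that homD(6)[OF g] module_act_closed[OF mM] submodD(5)[OF C] by simp
qed

lemma quotD:
  assumes "is_quot sc M A N g"
  shows "is_submod sc M A" "is_hom sc M N g" "g ` fst M = fst N" "{v \<in> fst M. g v = 0} = A"
  using assms unfolding is_quot_def by simp_all

lemma quot_zero_iff:
  assumes "is_quot sc M A N g"
  shows "is_zero_module N \<longleftrightarrow> A = fst M"
proof -
  have "0 \<in> fst M"
    using VS.subspace_0[OF module_subspace[OF homD(1)[OF quotD(2)[OF assms]]]] .
  have "is_zero_module N \<longleftrightarrow> g ` fst M = {0}"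
    using quotD(3)[OF assms] by (simp add: is_zero_module_def)
  also have "\<dots> \<longleftrightarrow> (\<forall>v\<in>fst M. g v = 0)"
    using \<open>0 \<in> fst M\<close> by (auto simp: set_eq_iff image_iff)
  also have "\<dots> \<longleftrightarrow> A = fst M"
    using quotD(4)[OF assms] by blast
  finally show ?thesis .
qed

lemma quot_restrict:
  assumes q: "is_quot sc M A N g" and B: "is_submod sc M B"
  shows "is_quot sc (B, snd M) (A \<inter> B) (g ` B, snd N) g"
proof -
  note g = quotD(2)[OF q]
  have "is_submod sc (B, snd M) (A \<inter> B)"
    using submod_submod[OF submod_Int[OF quotD(1)[OF q] B] B] by blast
  moreover have "is_hom sc (B, snd M) (g ` B, snd N) g"
    using hom_restrict[OF g B submod_image[OF g B]] by blast
  moreover have "{v \<in> B. g v = 0} = A \<inter> B"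
    using quotD(4)[OF q] submodD(3)[OF B] by blast
  ultimately show ?thesis
    unfolding is_quot_def by simp
qed

lemma quot_map_act:
  assumes A: "is_submod sc M A" and plin: "Vector_Spaces.linear vsc vsc p"
    and pA: "\<And>v. v - p v \<in> A" and p0: "\<And>v. v \<in> A \<Longrightarrow> p v = 0" and v: "v \<in> fst M"
  shows "p (snd M v a) = p (snd M (p v) a)"
proof -
  have "v - p v \<in> fst M"
    using pA submodD(3)[OF A] by blast
  then have "v - (v - p v) \<in> fst M"
    using VS.subspace_diff[OF module_subspace[OF submodD(1)[OF A]] v] by blast
  then have "snd M v a = snd M (p v) a + snd M (v - p v) a"
    using module_act_add[OF submodD(1)[OF A], of "p v" "v - p v" a] \<open>v - p v \<in> fst M\<close> by simp
  moreover have "snd M (v - p v) a \<in> A"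
    using submodD(5)[OF A pA] .
  ultimately show ?thesis
    using VS2.linear_add[OF plin] p0 by simp
qed

lemma quot_module_by_projection:
  assumes A: "is_submod sc M A" and plin: "Vector_Spaces.linear vsc vsc p"
    and pA: "\<And>v. v - p v \<in> A" and p0: "\<And>v. v \<in> A \<Longrightarrow> p v = 0"
  shows "is_module sc (p ` fst M, \<lambda>v a. p (snd M v a))"
proof -
  obtain V act where M: "M = (V, act)"
    by (cases M)
  note mM = submodD(1)[OF A, unfolded M is_module_iff]
  note padd = VS2.linear_add[OF plin] and psc = VS2.linear_scale[OF plin]
  have pV: "p v \<in> V" if "v \<in> V" for v
  proof -
    have "v - p v \<in> V"
      using pA submodD(3)[OF A] M by auto
    then have "v - (v - p v) \<in> V"
      using VS.subspace_diff mM that by blast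
    then show ?thesis
      by simp
  qed
  have pp: "p (p v) = p v" for v
    using p0[OF pA[of v]] padd[of "v - p v" "p v"] by simp
  have p_act: "v \<in> V \<Longrightarrow> p (act v a) = p (act (p v) a)" for v a
    using quot_map_act[OF A plin pA p0] M by simp
  show ?thesis
    unfolding M fst_conv snd_conv is_module_iff
  proof (intro conjI ballI allI)
    show "VS.subspace (p ` V)"
      using VS2.linear_subspace_image[OF plin] mM by blast
    show "vfin_dim (p ` V)"
      using vfin_dim_subset[of V "p ` V"] pV mM by blast
    fix u a b c assume "u \<in> p ` V"
    then obtain v where v: "v \<in> V" "u = p v"
      by blast
    have uV: "u \<in> V"
      using v pV by blast
    then have act_uV: "act u a \<in> V"
      using mM by blast
    then show "p (act u a) \<in> p ` V"
      by blast
    show "p (act u 1) = u"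
      using mM uV v pp by simp
    show "p (act u (a * b)) = p (act (p (act u a)) b)"
      using mM uV p_act[OF act_uV] by simp
    show "p (act u (a + b)) = p (act u a) + p (act u b)"
      using mM uV padd by simp
    show "p (act (vsc c u) a) = vsc c (p (act u a))" "p (act u (sc c a)) = vsc c (p (act u a))"
      using mM uV psc by simp_all
    fix w assume "w \<in> p ` V"
    then have "w \<in> V"
      using pV by blast
    then show "p (act (u + w) a) = p (act u a) + p (act w a)"
      using mM uV padd by simp
  qed
qed

lemma quot_by_projection:
  assumes A: "is_submod sc M A" and plin: "Vector_Spaces.linear vsc vsc p"
    and pA: "\<And>v. v - p v \<in> A" and p0: "\<And>v. v \<in> A \<Longrightarrow> p v = 0"
  shows "is_quot sc M A (p ` fst M, \<lambda>v a. p (snd M v a)) p"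
proof -
  have "is_hom sc M (p ` fst M, \<lambda>v a. p (snd M v a)) p"
    unfolding is_hom_def fst_conv snd_conv
  proof (intro conjI ballI allI)
    show "is_module sc M" "is_module sc (p ` fst M, \<lambda>v a. p (snd M v a))"
      using submodD(1)[OF A] quot_module_by_projection[OF assms] .
    fix v assume "v \<in> fst M"
    then show "p v \<in> p ` fst M" "p (snd M v a) = p (snd M (p v) a)" for a
      using quot_map_act[OF assms] by blast+
  qed (simp_all add: VS2.linear_add[OF plin] VS2.linear_scale[OF plin])
  moreover have "{v \<in> fst M. p v = 0} = A"
  proof
    show "{v \<in> fst M. p v = 0} \<subseteq> A"
      using pA by (metis (mono_tags, lifting) mem_Collect_eq diff_zero subsetI)
    show "A \<subseteq> {v \<in> fst M. p v = 0}"
      using p0 submodD(3)[OF A] by blast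
  qed
  ultimately show ?thesis
    unfolding is_quot_def using A by simp
qed

lemma quot_exists:
  assumes "is_submod sc M A"
  obtains N g where "is_quot sc M A N g"
  using linear_projection_along_exists[OF submodD(4)[OF assms]] quot_by_projection[OF assms] by metis

lemma maximal_proper_submod_exists:
  assumes mM: "is_module sc M" and "fst M \<noteq> {0}"
  obtains M' where "is_submod sc M M'" "M' \<noteq> fst M"
    "\<And>W. is_submod sc M W \<Longrightarrow> M' \<subseteq> W \<Longrightarrow> W = M' \<or> W = fst M"
proof -
  define S where "S = {W. is_submod sc M W \<and> W \<noteq> fst M}"
  have "{0} \<in> S"
    using submod_zero[OF mM] assms(2) unfolding S_def by blast
  moreover have dim_S: "VS.dim W < VS.dim (fst M)" if "W \<in> S" for W
    using VS_dim_psubset[OF module_vfin_dim[OF mM]] submodD(3,4) that unfolding S_def by blast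
  ultimately obtain M' where M': "M' \<in> S" and max: "\<And>W. W \<in> S \<Longrightarrow> VS.dim W \<le> VS.dim M'"
    using ex_has_greatest_nat[of "\<lambda>W. W \<in> S" "{0}" VS.dim "VS.dim (fst M)"] by force
  have "W = M' \<or> W = fst M" if W: "is_submod sc M W" "M' \<subseteq> W" for W
  proof (rule ccontr)
    assume "\<not> (W = M' \<or> W = fst M)"
    then have "W \<in> S" "M' \<subset> W"
      using W unfolding S_def by auto
    moreover have "vfin_dim W"
      using vfin_dim_subset[OF module_vfin_dim[OF mM] submodD(3)[OF W(1)]] .
    ultimately have "VS.dim M' < VS.dim W"
      using VS_dim_psubset M' submodD(4) unfolding S_def by blast
    then show False
      using max[OF \<open>W \<in> S\<close>] by linarith
  qed
  then show ?thesis
    using that M' unfolding S_def by blast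
qed

section \<open>Additive functions on submodules\<close>

lemma VLam_quot:
  assumes "\<theta> \<in> VLam sc" "is_quot sc M A N g"
  shows "\<theta> M = \<theta> (A, snd M) + \<theta> N"
  using assms unfolding VLam_def by blast

(* The second isomorphism theorem A/(A \<inter> B) \<cong> (A + B)/B in additive form. *)
lemma VLam_Int_add_eq:
  assumes th: "\<theta> \<in> VLam sc" and A: "is_submod sc M A" and B: "is_submod sc M B"
    and sum: "{x + y | x y. x \<in> A \<and> y \<in> B} = fst M"
  shows "\<theta> (A, snd M) + \<theta> (B, snd M) = \<theta> (A \<inter> B, snd M) + \<theta> M"
proof -
  obtain N g where q: "is_quot sc M B N g"
    using quot_exists[OF B] .
  have "fst N \<subseteq> g ` A"
  proof
    fix u assume "u \<in> fst N"
    then obtain v where "v \<in> fst M" "u = g v"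
      using quotD(3)[OF q] by blast
    moreover from \<open>v \<in> fst M\<close> have "v \<in> {x + y | x y. x \<in> A \<and> y \<in> B}"
      unfolding sum .
    ultimately obtain x y where "u = g (x + y)" "x \<in> A" "y \<in> B"
      by blast
    moreover have "g (x + y) = g x + g y" "g y = 0"
      using homD(4)[OF quotD(2)[OF q]] quotD(4)[OF q] submodD(3)[OF A] submodD(3)[OF B] calculation(2,3)
      by blast+
    ultimately show "u \<in> g ` A"
      by simp
  qed
  then have "(g ` A, snd N) = N"
    using quotD(3)[OF q] submodD(3)[OF A] by (metis image_mono prod.collapse subset_antisym)
  then have "\<theta> (A, snd M) = \<theta> (B \<inter> A, snd M) + \<theta> N"
    using VLam_quot[OF th quot_restrict[OF q A]] by simp
  moreover have "\<theta> M = \<theta> (B, snd M) + \<theta> N"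
    using VLam_quot[OF th q] .
  ultimately show ?thesis
    by (simp add: Int_commute)
qed

lemma submod_le_maximal_or_VLam_eq:
  assumes A: "is_submod sc M A" and M': "is_submod sc M M'"
    and max: "\<And>W. is_submod sc M W \<Longrightarrow> M' \<subseteq> W \<Longrightarrow> W = M' \<or> W = fst M"
  shows "A \<subseteq> M' \<or> (\<forall>\<theta>\<in>VLam sc. \<theta> (A, snd M) = \<theta> (A \<inter> M', snd M) + \<theta> M - \<theta> (M', snd M))"
proof -
  define K where "K = {x + y | x y. x \<in> A \<and> y \<in> M'}"
  have "is_submod sc M K"
    unfolding K_def using submod_sum[OF A M'] .
  moreover have "0 \<in> A" "0 \<in> M'"
    using VS.subspace_0 submodD(4)[OF A] submodD(4)[OF M'] by blast+
  then have "A \<subseteq> K" "M' \<subseteq> K"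
    unfolding K_def by (metis (mono_tags, lifting) add.right_neutral add.left_neutral mem_Collect_eq subsetI)+
  ultimately have "A \<subseteq> M' \<or> K = fst M"
    using max by blast
  moreover have "\<theta> (A, snd M) = \<theta> (A \<inter> M', snd M) + \<theta> M - \<theta> (M', snd M)"
    if "K = fst M" "\<theta> \<in> VLam sc" for \<theta>
    using VLam_Int_add_eq[OF that(2) A M'] that(1) unfolding K_def by simp
  ultimately show ?thesis
    by blast
qed

lemma finite_submod_values:
  assumes "is_module sc M"
  shows "finite ((\<lambda>A. restrict (\<lambda>\<theta>. \<theta> (A, snd M)) (VLam sc)) ` {A. is_submod sc M A})"
  using assms
proof (induction "VS.dim (fst M)" arbitrary: M rule: less_induct)
  case less
  define val where "val A = restrict (\<lambda>\<theta>. \<theta> (A, snd M)) (VLam sc)" for A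
  show ?case
  proof (cases "fst M = {0}")
    case True
    then have "{A. is_submod sc M A} \<subseteq> {{0}}"
      using submodD(3,4) VS.subspace_0 by blast
    then show ?thesis
      by (meson finite.emptyI finite_imageI finite_insert finite_subset)
  next
    case False
    obtain M' where M': "is_submod sc M M'" "M' \<noteq> fst M"
      and max: "\<And>W. is_submod sc M W \<Longrightarrow> M' \<subseteq> W \<Longrightarrow> W = M' \<or> W = fst M"
      using maximal_proper_submod_exists[OF less.prems False] by blast
    define V' where "V' = val ` {A. is_submod sc (M', snd M) A}"
    have "VS.dim M' < VS.dim (fst M)"
      using VS_dim_psubset[OF module_vfin_dim[OF less.prems]] submodD(3,4)[OF M'(1)] M'(2) by blast
    then have "finite V'"
      using less.hyps[OF _ submodD(2)[OF M'(1)]] unfolding V'_def val_def by simp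
    have val_mem: "val A \<in> V' \<union> (\<lambda>f. restrict (\<lambda>\<theta>. f \<theta> + \<theta> M - \<theta> (M', snd M)) (VLam sc)) ` V'"
      if A: "is_submod sc M A" for A
    proof (cases "A \<subseteq> M'")
      case True
      then show ?thesis
        using submod_submod[OF A M'(1)] unfolding V'_def by blast
    next
      case False
      then have "val A = restrict (\<lambda>\<theta>. val (A \<inter> M') \<theta> + \<theta> M - \<theta> (M', snd M)) (VLam sc)"
        using submod_le_maximal_or_VLam_eq[OF A M'(1) max] unfolding val_def by (auto simp: fun_eq_iff)
      moreover have "is_submod sc (M', snd M) (A \<inter> M')"
        using submod_submod[OF submod_Int[OF A M'(1)] M'(1)] by blast
      ultimately show ?thesis
        unfolding V'_def by blast
    qed
    have "val ` {A. is_submod sc M A} \<subseteq> V' \<union> (\<lambda>f. restrict (\<lambda>\<theta>. f \<theta> + \<theta> M - \<theta> (M', snd M)) (VLam sc)) ` V'"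
      using val_mem by blast
    then show ?thesis
      using \<open>finite V'\<close> unfolding val_def by (simp add: finite_subset)
  qed
qed

lemma quot_vimage:
  assumes q: "is_quot sc M A N g" and C: "is_submod sc N C"
  shows "is_quot sc ({v \<in> fst M. g v \<in> C}, snd M) A (C, snd N) g"
proof -
  let ?B = "{v \<in> fst M. g v \<in> C}"
  have B: "is_submod sc M ?B"
    using submod_vimage[OF quotD(2)[OF q] C] .
  have "A \<subseteq> ?B"
  proof
    fix v assume "v \<in> A"
    then have "v \<in> {v \<in> fst M. g v = 0}"
      using quotD(4)[OF q] by simp
    then show "v \<in> ?B"
      using VS.subspace_0[OF submodD(4)[OF C]] by simp
  qed
  then have "A \<inter> ?B = A"
    by blast
  moreover have "C \<subseteq> g ` ?B"
  proof
    fix u assume "u \<in> C"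
    then have "u \<in> g ` fst M"
      using quotD(3)[OF q] submodD(3)[OF C] by auto
    then show "u \<in> g ` ?B"
      using \<open>u \<in> C\<close> by blast
  qed
  then have "g ` ?B = C"
    by blast
  ultimately show ?thesis
    using quot_restrict[OF q B] by simp
qed

section \<open>Strict subobjects and pseudo-walls\<close>

lemma torsion_class_image:
  "torsion_class sc G \<Longrightarrow> M \<in> G \<Longrightarrow> is_hom sc M N g \<Longrightarrow> g ` fst M = fst N \<Longrightarrow> N \<in> G"
  unfolding torsion_class_def by blast

lemma torsion_class_extension:
  "torsion_class sc G \<Longrightarrow> is_quot sc M A N g \<Longrightarrow> (A, snd M) \<in> G \<Longrightarrow> N \<in> G \<Longrightarrow> M \<in> G"
  unfolding torsion_class_def by blast

lemma strict_subobjD: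
  assumes "strict_subobj sc G M A"
  shows "is_submod sc M A" "(A, snd M) \<in> G" "\<And>B. subobj sc G M B \<Longrightarrow> (A \<inter> B, snd M) \<in> G"
  using assms unfolding strict_subobj_def subobj_def by blast+

lemma strict_subobj_vimage:
  assumes tc: "torsion_class sc G" and q: "is_quot sc M A N g"
    and A: "strict_subobj sc G M A" and C: "strict_subobj sc G N C"
  shows "strict_subobj sc G M {v \<in> fst M. g v \<in> C}"
proof -
  let ?B = "{v \<in> fst M. g v \<in> C}"
  have "(?B, snd M) \<in> G"
    using torsion_class_extension[OF tc quot_vimage[OF q strict_subobjD(1)[OF C]]]
      strict_subobjD(2)[OF A] strict_subobjD(2)[OF C] by simp
  then have "subobj sc G M ?B"
    unfolding subobj_def using submod_vimage[OF quotD(2)[OF q] strict_subobjD(1)[OF C]] by blast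
  moreover have "(?B \<inter> B, snd M) \<in> G" if B: "subobj sc G M B" for B
  proof -
    have Bsub: "is_submod sc M B" and "(B, snd M) \<in> G"
      using B unfolding subobj_def by blast+
    have qB: "is_quot sc (B, snd M) (A \<inter> B) (g ` B, snd N) g"
      using quot_restrict[OF q Bsub] .
    have gB: "is_submod sc N (g ` B)"
      using submod_image[OF quotD(2)[OF q] Bsub] .
    then have "(g ` B, snd N) \<in> G"
      using torsion_class_image[OF tc \<open>(B, snd M) \<in> G\<close> quotD(2,3)[OF qB]] by simp
    then have CB: "(C \<inter> g ` B, snd N) \<in> G"
      using strict_subobjD(3)[OF C] gB unfolding subobj_def by blast
    have "is_submod sc (g ` B, snd N) (C \<inter> g ` B)"
      using submod_submod[OF submod_Int[OF strict_subobjD(1)[OF C] gB] gB] by blast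
    then have "is_quot sc ({v \<in> B. g v \<in> C \<inter> g ` B}, snd M) (A \<inter> B) (C \<inter> g ` B, snd N) g"
      using quot_vimage[OF qB] by (simp only: fst_conv snd_conv)
    then have "({v \<in> B. g v \<in> C \<inter> g ` B}, snd M) \<in> G"
      using torsion_class_extension[OF tc _ _ CB] strict_subobjD(3)[OF A B] by simp
    moreover have "{v \<in> B. g v \<in> C \<inter> g ` B} = ?B \<inter> B"
      using submodD(3)[OF Bsub] by (auto simp: Int_def)
    ultimately show ?thesis
      by simp
  qed
  ultimately show ?thesis
    unfolding strict_subobj_def by blast
qed

definition proper_strict_subobjs ::
    "('k::field \<Rightarrow> 'a::ring_1 \<Rightarrow> 'a) \<Rightarrow> ('k, 'a) rmod set \<Rightarrow> ('k, 'a) rmod \<Rightarrow> (nat \<Rightarrow> 'k) set set" where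
  "proper_strict_subobjs sc G M = {A. strict_subobj sc G M A \<and> A \<noteq> fst M}"

lemma Wall_if_strict_subobj_attains:
  assumes tc: "torsion_class sc G" and th: "\<theta> \<in> VLam sc" and "M \<in> G"
    and "A \<in> proper_strict_subobjs sc G M" "\<theta> (A, snd M) = \<theta> M"
    and le: "\<And>B. B \<in> proper_strict_subobjs sc G M \<Longrightarrow> \<theta> (B, snd M) \<le> \<theta> M"
  shows "\<theta> \<in> Wall sc G"
proof -
  have A: "strict_subobj sc G M A" "A \<noteq> fst M" "\<theta> (A, snd M) = \<theta> M"
    using assms(4,5) unfolding proper_strict_subobjs_def by blast+
  obtain N g where q: "is_quot sc M A N g"
    using quot_exists[OF strict_subobjD(1)[OF A(1)]] .
  have "N \<in> G"
    using torsion_class_image[OF tc \<open>M \<in> G\<close> quotD(2,3)[OF q]] .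
  moreover have "\<not> is_zero_module N"
    using quot_zero_iff[OF q] A(2) by blast
  moreover have "\<theta> N = 0"
    using VLam_quot[OF th q] A(3) by simp
  moreover have "\<theta> (C, snd N) \<le> 0" if C: "strict_subobj sc G N C" for C
  proof -
    let ?B = "{v \<in> fst M. g v \<in> C}"
    have "\<theta> (?B, snd M) = \<theta> (A, snd M) + \<theta> (C, snd N)"
      using VLam_quot[OF th quot_vimage[OF q strict_subobjD(1)[OF C]]] by simp
    moreover have "\<theta> (?B, snd M) \<le> \<theta> M"
      using le strict_subobj_vimage[OF tc q A(1) C] unfolding proper_strict_subobjs_def
      by (cases "?B = fst M") auto
    ultimately show ?thesis
      using A(3) by simp
  qed
  ultimately show ?thesis
    unfolding Wall_def Dwall_def using th by blast
qed

lemma Pcls_iff: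
  assumes th: "\<theta> \<in> VLam sc" and "M \<in> G" "is_module sc M" "\<not> is_zero_module M"
  shows "M \<in> Pcls sc G \<theta> \<longleftrightarrow> (\<forall>A\<in>proper_strict_subobjs sc G M. \<theta> (A, snd M) < \<theta> M)"
proof -
  have "(\<forall>N g. is_quot sc M A N g \<and> \<not> is_zero_module N \<longrightarrow> \<theta> N > 0) \<longleftrightarrow>
      (A \<noteq> fst M \<longrightarrow> \<theta> (A, snd M) < \<theta> M)" if A: "strict_subobj sc G M A" for A
  proof -
    obtain N g where q: "is_quot sc M A N g"
      using quot_exists[OF strict_subobjD(1)[OF A]] .
    have val: "\<theta> N' = \<theta> M - \<theta> (A, snd M)" if "is_quot sc M A N' g'" for N' g'
      using VLam_quot[OF th that] by simp
    show ?thesis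
    proof
      assume pos: "\<forall>N g. is_quot sc M A N g \<and> \<not> is_zero_module N \<longrightarrow> \<theta> N > 0"
      show "A \<noteq> fst M \<longrightarrow> \<theta> (A, snd M) < \<theta> M"
      proof
        assume "A \<noteq> fst M"
        then have "\<theta> N > 0"
          using pos q quot_zero_iff[OF q] by blast
        then show "\<theta> (A, snd M) < \<theta> M"
          using val[OF q] by simp
      qed
    next
      assume less: "A \<noteq> fst M \<longrightarrow> \<theta> (A, snd M) < \<theta> M"
      show "\<forall>N g. is_quot sc M A N g \<and> \<not> is_zero_module N \<longrightarrow> \<theta> N > 0"
      proof (intro allI impI, elim conjE)
        fix N' g' assume q': "is_quot sc M A N' g'" and "\<not> is_zero_module N'"
        then have "A \<noteq> fst M"
          using quot_zero_iff[OF q'] by blast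
        then show "\<theta> N' > 0"
          using less val[OF q'] by simp
      qed
    qed
  qed
  then show ?thesis
    using assms unfolding Pcls_def proper_strict_subobjs_def by blast
qed

section \<open>Crossing a wall along a path\<close>

lemma finite_submod_representatives:
  assumes "is_module sc M" "\<S> \<subseteq> {A. is_submod sc M A}"
  obtains \<A> where "finite \<A>" "\<A> \<subseteq> \<S>"
    "\<And>A. A \<in> \<S> \<Longrightarrow> \<exists>A'\<in>\<A>. \<forall>\<theta>\<in>VLam sc. \<theta> (A', snd M) = \<theta> (A, snd M)"
proof -
  define val where "val A = restrict (\<lambda>\<theta>. \<theta> (A, snd M)) (VLam sc)" for A
  have "finite (val ` \<S>)"
    using finite_submod_values[OF assms(1)] assms(2) unfolding val_def
    by (meson finite_subset image_mono)
  then obtain \<A> where "\<A> \<subseteq> \<S>" "finite \<A>" "val ` \<S> = val ` \<A>"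
    using finite_subset_image[of "val ` \<S>" val \<S>] by blast
  moreover have "\<exists>A'\<in>\<A>. \<forall>\<theta>\<in>VLam sc. \<theta> (A', snd M) = \<theta> (A, snd M)" if "A \<in> \<S>" for A
  proof -
    have "val A \<in> val ` \<S>"
      using \<open>A \<in> \<S>\<close> by (rule imageI)
    then obtain A' where "A' \<in> \<A>" and eq: "val A' = val A"
      unfolding \<open>val ` \<S> = val ` \<A>\<close> by (metis imageE)
    have "\<theta> (A', snd M) = \<theta> (A, snd M)" if "\<theta> \<in> VLam sc" for \<theta>
      using fun_cong[OF eq, of \<theta>] that by (simp add: val_def)
    then show ?thesis
      using \<open>A' \<in> \<A>\<close> by blast
  qed
  ultimately show ?thesis
    using that by blast
qed

lemma continuous_on_Min:
  fixes f :: "'i \<Rightarrow> 'a::topological_space \<Rightarrow> real"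
  assumes "finite I" "I \<noteq> {}" "\<And>i. i \<in> I \<Longrightarrow> continuous_on T (f i)"
  shows "continuous_on T (\<lambda>t. Min ((\<lambda>i. f i t) ` I))"
  using assms
proof (induction I rule: finite_ne_induct)
  case (singleton i)
  then show ?case
    by simp
next
  case (insert i I)
  have eq: "(\<lambda>t. Min ((\<lambda>i. f i t) ` insert i I)) = (\<lambda>t. min (f i t) (Min ((\<lambda>i. f i t) ` I)))"
    using insert.hyps by (simp add: fun_eq_iff)
  show ?case
  proof (subst eq, rule continuous_on_min)
    show "continuous_on T (f i)"
      using insert.prems by blast
    show "continuous_on T (\<lambda>t. Min ((\<lambda>i. f i t) ` I))"
      using insert.IH insert.prems by blast
  qed
qed

lemma IVT_finite_family:
  fixes f :: "'i \<Rightarrow> real \<Rightarrow> real"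
  assumes "finite I" and cont: "\<And>i. i \<in> I \<Longrightarrow> continuous_on {0..1} (f i)"
    and pos: "\<And>i. i \<in> I \<Longrightarrow> f i 0 > 0" and "i1 \<in> I" "f i1 1 \<le> 0"
  obtains s i0 where "s \<in> {0..1}" "\<And>i. i \<in> I \<Longrightarrow> f i s \<ge> 0" "i0 \<in> I" "f i0 s = 0"
proof -
  define h where "h t = Min ((\<lambda>i. f i t) ` I)" for t
  have I: "finite ((\<lambda>i. f i t) ` I)" "(\<lambda>i. f i t) ` I \<noteq> {}" for t
    using assms(1,4) by auto
  have "continuous_on {0..1} h"
    unfolding h_def using continuous_on_Min assms(1,4) cont by blast
  moreover have "h 1 \<le> 0" "0 \<le> h 0"
    unfolding h_def using assms(4,5) pos I by (auto simp: Min_le_iff less_imp_le)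
  ultimately obtain s where s: "s \<in> {0..1}" "h s = 0"
    using IVT2'[of h 1 0 0] by auto
  moreover have "f i s \<ge> 0" if "i \<in> I" for i
    using s(2) that I unfolding h_def by (metis Min_le image_eqI)
  moreover obtain i0 where "i0 \<in> I" "f i0 s = 0"
    using Min_in[OF I] s(2) unfolding h_def by (metis imageE)
  ultimately show ?thesis
    using that by blast
qed

lemma Pcls_iff_representatives:
  assumes th: "\<theta> \<in> VLam sc" and "M \<in> G" "is_module sc M" "\<not> is_zero_module M"
    and "\<A> \<subseteq> proper_strict_subobjs sc G M"
    and rep: "\<And>A. A \<in> proper_strict_subobjs sc G M \<Longrightarrow>
      \<exists>A'\<in>\<A>. \<forall>\<theta>\<in>VLam sc. \<theta> (A', snd M) = \<theta> (A, snd M)"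
  shows "M \<in> Pcls sc G \<theta> \<longleftrightarrow> (\<forall>A\<in>\<A>. \<theta> (A, snd M) < \<theta> M)"
proof -
  have "(\<forall>A\<in>\<A>. \<theta> (A, snd M) < \<theta> M) \<Longrightarrow> \<theta> (A, snd M) < \<theta> M"
    if A: "A \<in> proper_strict_subobjs sc G M" for A
  proof -
    obtain A' where "A' \<in> \<A>" "\<theta> (A', snd M) = \<theta> (A, snd M)"
      using rep[OF A] th by blast
    then show "(\<forall>A\<in>\<A>. \<theta> (A, snd M) < \<theta> M) \<Longrightarrow> \<theta> (A, snd M) < \<theta> M"
      by force
  qed
  then show ?thesis
    using Pcls_iff[OF assms(1-4)] \<open>\<A> \<subseteq> proper_strict_subobjs sc G M\<close> by blast
qed

lemma Wall_crossed_if_Pcls_changes: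
  assumes tc: "torsion_class sc G" and path: "\<And>t. t \<in> {0..1} \<Longrightarrow> \<gamma> t \<in> VLam sc"
    and cont: "\<And>X. continuous_on {0..1} (\<lambda>t. \<gamma> t X)"
    and M: "M \<in> G" "is_module sc M" "\<not> is_zero_module M"
    and P0: "M \<in> Pcls sc G (\<gamma> 0)" and P1: "M \<notin> Pcls sc G (\<gamma> (1::real))"
  shows "\<exists>s\<in>{0..1}. \<gamma> s \<in> Wall sc G"
proof -
  have "proper_strict_subobjs sc G M \<subseteq> {A. is_submod sc M A}"
    unfolding proper_strict_subobjs_def using strict_subobjD(1) by blast
  then obtain \<A> where "finite \<A>" "\<A> \<subseteq> proper_strict_subobjs sc G M"
    and rep: "\<And>A. A \<in> proper_strict_subobjs sc G M \<Longrightarrow>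
      \<exists>A'\<in>\<A>. \<forall>\<theta>\<in>VLam sc. \<theta> (A', snd M) = \<theta> (A, snd M)"
    using finite_submod_representatives[OF M(2)] by blast
  note P_iff = Pcls_iff_representatives[OF path M \<open>\<A> \<subseteq> _\<close> rep]
  obtain A1 where "A1 \<in> \<A>" "\<gamma> 1 M - \<gamma> 1 (A1, snd M) \<le> 0"
    using P1 P_iff[of 1] by (auto simp: not_less)
  moreover have "\<gamma> 0 M - \<gamma> 0 (A, snd M) > 0" if "A \<in> \<A>" for A
    using P0 P_iff[of 0] that by simp
  moreover have "continuous_on {0..1} (\<lambda>t. \<gamma> t M - \<gamma> t (A, snd M))" for A
    using continuous_on_diff[OF cont cont] .
  ultimately obtain s A0 where s: "s \<in> {0..1}"
    and le: "\<And>A. A \<in> \<A> \<Longrightarrow> \<gamma> s M - \<gamma> s (A, snd M) \<ge> 0"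
    and A0: "A0 \<in> \<A>" "\<gamma> s M - \<gamma> s (A0, snd M) = 0"
    using IVT_finite_family[OF \<open>finite \<A>\<close>, of "\<lambda>A t. \<gamma> t M - \<gamma> t (A, snd M)"] by blast
  have "\<gamma> s (B, snd M) \<le> \<gamma> s M" if B: "B \<in> proper_strict_subobjs sc G M" for B
  proof -
    obtain A' where "A' \<in> \<A>" "\<gamma> s (A', snd M) = \<gamma> s (B, snd M)"
      using rep[OF B] path[OF s] by blast
    then show ?thesis
      using le[of A'] by simp
  qed
  then have "\<gamma> s \<in> Wall sc G"
    using Wall_if_strict_subobj_attains[OF tc path[OF s] M(1)] A0 \<open>\<A> \<subseteq> _\<close> by auto
  then show ?thesis
    using s by blast
qed

lemma Pcls_subset_along_path:
  fixes \<theta>0 \<theta>1 :: "('k::field, 'a::ring_1) rmod \<Rightarrow> real"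
  assumes tc: "torsion_class sc G" and "same_path_comp sc G \<theta>0 \<theta>1"
  shows "Pcls sc G \<theta>0 \<subseteq> Pcls sc G \<theta>1"
proof
  obtain \<gamma> :: "real \<Rightarrow> ('k, 'a) rmod \<Rightarrow> real" where \<gamma>: "\<gamma> 0 = \<theta>0" "\<gamma> 1 = \<theta>1"
    and path: "\<And>t. t \<in> {0..1} \<Longrightarrow> \<gamma> t \<in> VLam sc - Wall sc G"
    and cont: "\<And>X. continuous_on {0..1} (\<lambda>t. \<gamma> t X)"
    using assms(2) unfolding same_path_comp_def by blast
  fix M assume M0: "M \<in> Pcls sc G \<theta>0"
  then have "is_module sc M" "is_zero_module M \<or> M \<in> G"
    unfolding Pcls_def by blast+
  moreover have False if M: "M \<in> G" "\<not> is_zero_module M" "M \<notin> Pcls sc G \<theta>1"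
  proof -
    have "\<gamma> t \<in> VLam sc" if "t \<in> {0..1}" for t
      using path[OF that] by blast
    then obtain s where "s \<in> {0..1}" "\<gamma> s \<in> Wall sc G"
      using Wall_crossed_if_Pcls_changes[OF tc _ cont M(1) \<open>is_module sc M\<close> M(2)
          M0[folded \<gamma>(1)] M(3)[folded \<gamma>(2)]]
      by blast
    then show False
      using path by blast
  qed
  ultimately show "M \<in> Pcls sc G \<theta>1"
    unfolding Pcls_def by blast
qed

lemma same_path_comp_sym:
  fixes \<theta>0 \<theta>1 :: "('k::field, 'a::ring_1) rmod \<Rightarrow> real"
  assumes "same_path_comp sc G \<theta>0 \<theta>1"
  shows "same_path_comp sc G \<theta>1 \<theta>0"
proof -
  obtain \<gamma> :: "real \<Rightarrow> ('k, 'a) rmod \<Rightarrow> real" where "\<gamma> 0 = \<theta>0" "\<gamma> 1 = \<theta>1"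
    and path: "\<forall>t\<in>{0..1}. \<gamma> t \<in> VLam sc - Wall sc G"
    and cont: "\<And>X. continuous_on {0..1} (\<lambda>t. \<gamma> t X)"
    using assms unfolding same_path_comp_def by blast
  have "continuous_on {0..1} (\<lambda>t. \<gamma> (1 - t) X)" for X
  proof (rule continuous_on_compose2[OF cont[of X]])
    show "continuous_on {0..1} (\<lambda>t::real. 1 - t)"
      by (intro continuous_intros)
  qed auto
  moreover have "\<forall>t\<in>{0..1}. \<gamma> (1 - t) \<in> VLam sc - Wall sc G"
    using path by simp
  ultimately show ?thesis
    unfolding same_path_comp_def using \<open>\<gamma> 0 = \<theta>0\<close> \<open>\<gamma> 1 = \<theta>1\<close>
    by (intro exI[of _ "\<lambda>t. \<gamma> (1 - t)"]) simp
qed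

theorem mainTheorem14:
  fixes sc :: "'k::field \<Rightarrow> 'a::ring_1 \<Rightarrow> 'a"
    and G :: "('k, 'a) rmod set"
    and \<theta>0 \<theta>1 :: "('k, 'a) rmod \<Rightarrow> real"
  assumes "fd_algebra sc"
    and "torsion_class sc G"
    and "\<theta>0 \<in> VLam sc - Wall sc G"
    and "\<theta>1 \<in> VLam sc - Wall sc G"
    and "same_path_comp sc G \<theta>0 \<theta>1"
  shows "Pcls sc G \<theta>0 = Pcls sc G \<theta>1"
  \<comment> \<open>The path already lies in VLam - Wall.\<close>
  using Pcls_subset_along_path[OF assms(2)] assms(5) same_path_comp_sym[OF assms(5)] by blast

end
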